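(* Let $q\in\mathbb{R}[x]$ be a positive definite polynomial of degree two. (a) For every psd polynomial $f\in\mathbb{R}[x]$ there exist $\xi,\eta\in\mathbb{R}[x]$ with $f=\eta^2+q\xi^2$. (b) If $f\neq0$ in (a) has $\deg(f)=2d$, then the number of pairs $(\xi,\eta)\in\mathbb{R}[x]^2$ with $f=\eta^2+q\xi^2$ is at most $2^{d+1}$, with equality if and only if $q\nmid f$ and $f$ is square-free.
   Context: A real polynomial is psd (positive semidefinite) if it takes only nonnegative values on $\mathbb{R}$, and positive definite if it takes only positive values on $\mathbb{R}$. *)

theory Defs
  imports "HOL-Computational_Algebra.Polynomial" "HOL-Computational_Algebra.Squarefree"
begin

definition psd_poly :: "real poly \<Rightarrow> bool" where
  "psd_poly f \<longleftrightarrow> (\<forall>x. poly f x \<ge> 0)"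

definition pd_poly :: "real poly \<Rightarrow> bool" where
  "pd_poly f \<longleftrightarrow> (\<forall>x. poly f x > 0)"

end

theory Submission
  imports Defs
    "HOL-Computational_Algebra.Polynomial_Factorial"
    "HOL-Computational_Algebra.Field_as_Ring"
    "HOL-Computational_Algebra.Fundamental_Theorem_Algebra"
begin

text \<open>Write a pair \<open>(\<xi>, \<eta>)\<close> as \<open>\<eta> + \<xi> \<surd>(-q)\<close> in \<open>\<real>[x][\<surd>(-q)]\<close>, so that
  \<open>\<eta>\<^sup>2 + q \<xi>\<^sup>2\<close> is its norm, which is multiplicative. A psd polynomial is a product of
  squares \<open>(x - s)\<^sup>2\<close> and positive quadratics \<open>(x - z) (x - cnj z)\<close>, and each of the
  latter is a norm: for a linear \<open>e\<close> with \<open>e(z)\<^sup>2 = -q(z)\<close>, \<open>e\<^sup>2 + q\<close> is a positive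
  multiple of it.

  For (b), strip one such factor \<open>h\<close> from \<open>f = h g\<close>. If \<open>h = (x - s)\<^sup>2\<close> or \<open>h = q\<close>,
  every representation of \<open>f\<close> is \<open>x - s\<close>, resp. \<open>\<surd>(-q)\<close>, times a unique one of \<open>g\<close>.
  Otherwise \<open>h = p \<cdot> cnj p\<close> with \<open>p\<close> prime, and the two ring homomorphisms
  \<open>\<real>[x][\<surd>(-q)] \<rightarrow> \<complex>\<close> sending \<open>x\<close> to \<open>z\<close> show that every representation of \<open>f\<close> is
  \<open>p\<close> or \<open>cnj p\<close> times one of \<open>g\<close>; the two families are disjoint exactly when
  \<open>h\<close> does not divide \<open>g\<close>. Induction on the degree gives the bound \<open>2\<^bsup>d+1\<^esub>\<close>, attained exactly when
  only the last kind of factor occurs and never twice.\<close>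

section \<open>Evaluating real polynomials at complex points\<close>

definition cpoly :: "real poly \<Rightarrow> complex \<Rightarrow> complex" where
  "cpoly p = poly (map_poly of_real p)"

lemma cpoly_0 [simp]: "cpoly 0 z = 0"
  by (simp add: cpoly_def)

lemma cpoly_pCons [simp]: "cpoly (pCons a p) z = of_real a + z * cpoly p z"
  by (simp add: cpoly_def map_poly_pCons)

lemma cpoly_add [simp]: "cpoly (p + q) z = cpoly p z + cpoly q z"
  by (induction p q rule: poly_induct2) (auto simp: algebra_simps)

lemma cpoly_mult [simp]: "cpoly (p * q) z = cpoly p z * cpoly q z"
proof -
  have "cpoly (smult a q) z = of_real a * cpoly q z" for a
    by (induction q) (auto simp: algebra_simps)
  then show ?thesis
    by (induction p) (auto simp: algebra_simps)
qed

lemma cpoly_minus [simp]: "cpoly (- p) z = - cpoly p z"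
  using cpoly_mult[of "[:-1:]" p z] by simp

lemma cpoly_diff [simp]: "cpoly (p - q) z = cpoly p z - cpoly q z"
  using cpoly_add[of p "- q" z] by simp

lemma cpoly_1 [simp]: "cpoly 1 z = 1"
  by (simp add: cpoly_def)

lemma cpoly_power [simp]: "cpoly (p ^ n) z = cpoly p z ^ n"
  by (induction n) simp_all

lemma cpoly_of_real: "cpoly p (of_real x) = of_real (poly p x)"
  by (induction p) auto

section \<open>The real quadratic with roots \<open>z\<close> and \<open>cnj z\<close>\<close>

definition conj_quad :: "complex \<Rightarrow> real poly" where
  "conj_quad z = [:(Re z)^2 + (Im z)^2, -2 * Re z, 1:]"

lemma degree_conj_quad [simp]: "degree (conj_quad z) = 2"
  by (simp add: conj_quad_def)

lemma conj_quad_nonzero [simp]: "conj_quad z \<noteq> 0"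
  by (simp add: conj_quad_def)

lemma not_is_unit_conj_quad [simp]: "\<not> is_unit (conj_quad z)"
  by (simp add: is_unit_iff_degree)

lemma cpoly_conj_quad_self [simp]: "cpoly (conj_quad z) z = 0"
  by (simp add: conj_quad_def complex_eq_iff power2_eq_square algebra_simps)

lemma poly_conj_quad: "poly (conj_quad z) x = (x - Re z)^2 + (Im z)^2"
  by (simp add: conj_quad_def power2_eq_square algebra_simps)

lemma pd_poly_conj_quad: "Im z \<noteq> 0 \<Longrightarrow> pd_poly (conj_quad z)"
  by (simp add: pd_poly_def poly_conj_quad add_nonneg_pos)

lemma conj_quad_dvd_iff:
  assumes "Im z \<noteq> 0"
  shows "conj_quad z dvd p \<longleftrightarrow> cpoly p z = 0"
proof
  assume "cpoly p z = 0"
  define r where "r = p mod conj_quad z"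
  have "degree r < 2"
    using degree_mod_less[of "conj_quad z" p] by (cases "r = 0") (auto simp: r_def)
  then have r: "r = [:coeff r 0, coeff r 1:]"
    by (intro poly_eqI) (auto simp: coeff_pCons split: nat.splits intro!: coeff_eq_0)
  have "p = conj_quad z * (p div conj_quad z) + r"
    by (simp add: r_def)
  then have "cpoly r z = 0"
    using \<open>cpoly p z = 0\<close> by (metis cpoly_add cpoly_mult cpoly_conj_quad_self mult_zero_left add_0)
  then have "of_real (coeff r 0) + z * of_real (coeff r 1) = 0"
    by (subst (asm) r) simp
  then have "coeff r 1 = 0" "coeff r 0 = 0"
    using assms by (auto simp: complex_eq_iff)
  then have "r = 0"
    by (subst r) simp
  then show "conj_quad z dvd p"
    by (simp add: r_def mod_eq_0_iff_dvd)
qed auto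

lemma prime_elem_conj_quad:
  assumes "Im z \<noteq> 0"
  shows "prime_elem (conj_quad z)"
  by (rule prime_elemI) (simp_all add: conj_quad_dvd_iff[OF assms])

lemma exists_conj_quad_dvd:
  assumes "degree f > 0" and "\<And>x. poly f x \<noteq> 0"
  obtains z where "Im z \<noteq> 0" "conj_quad z dvd f"
proof -
  have "degree (map_poly complex_of_real f) = degree f"
    by (rule degree_map_poly) simp
  then have "\<not> constant (poly (map_poly complex_of_real f))"
    using assms(1) constant_degree[of "map_poly complex_of_real f"] by simp
  then obtain z where z: "cpoly f z = 0"
    using fundamental_theorem_of_algebra unfolding cpoly_def by blast
  have "Im z \<noteq> 0"
  proof
    assume "Im z = 0"
    then have "z = of_real (Re z)"
      by (simp add: complex_eq_iff)
    with z assms(2)[of "Re z"] show False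
      by (metis cpoly_of_real of_real_eq_0_iff)
  qed
  with z that show ?thesis
    using conj_quad_dvd_iff by blast
qed

lemma pd_poly_conj_quad_dvd_eq_smult:
  assumes "pd_poly h" "degree h \<le> 2" "Im z \<noteq> 0" "conj_quad z dvd h"
  obtains \<kappa> where "\<kappa> > 0" "h = smult \<kappa> (conj_quad z)"
proof -
  obtain k where k: "h = conj_quad z * k"
    using assms(4) by (elim dvdE)
  have "h \<noteq> 0"
    using assms(1) by (auto simp: pd_poly_def)
  then have "degree k = 0"
    using k assms(2) by (auto simp: degree_mult_eq)
  then obtain \<kappa> where \<kappa>: "k = [:\<kappa>:]"
    by (elim degree_eq_zeroE)
  have "0 < \<kappa> * poly (conj_quad z) 0"
    using assms(1) by (simp add: pd_poly_def k \<kappa>)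
  moreover have "0 < poly (conj_quad z) 0"
    using pd_poly_conj_quad[OF assms(3)] by (simp add: pd_poly_def)
  ultimately have "\<kappa> > 0"
    by (simp add: zero_less_mult_iff)
  with that show ?thesis
    by (simp add: k \<kappa>)
qed

lemma pd_quadratic_eq_smult_conj_quad:
  assumes "pd_poly q" and "degree q = 2"
  obtains z \<kappa> where "Im z \<noteq> 0" "\<kappa> > 0" "q = smult \<kappa> (conj_quad z)"
proof -
  have "poly q x \<noteq> 0" for x
    using assms(1) by (simp add: pd_poly_def less_imp_neq[symmetric])
  then obtain z where z: "Im z \<noteq> 0" "conj_quad z dvd q"
    using exists_conj_quad_dvd[of q] assms(2) by auto
  with assms obtain \<kappa> where "\<kappa> > 0" "q = smult \<kappa> (conj_quad z)"
    by (elim pd_poly_conj_quad_dvd_eq_smult) simp_all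
  with z(1) that show ?thesis
    by blast
qed

lemma prime_elem_pd_quadratic:
  assumes "pd_poly q" and "degree q = 2"
  shows "prime_elem q"
proof -
  obtain z \<kappa> where z: "Im z \<noteq> 0" "\<kappa> > 0" "q = smult \<kappa> (conj_quad z)"
    using pd_quadratic_eq_smult_conj_quad[OF assms] .
  then have "q = [:\<kappa>:] * conj_quad z" "is_unit [:\<kappa>:]"
    by (simp_all add: is_unit_iff_degree)
  then show ?thesis
    using prime_elem_conj_quad[OF z(1)] prime_elem_mult_unit_left by metis
qed

lemma lead_coeff_pd_quadratic:
  assumes "pd_poly q" and "degree q = 2"
  shows "lead_coeff q > 0"
proof -
  obtain z \<kappa> where "\<kappa> > 0" "q = smult \<kappa> (conj_quad z)"
    using pd_quadratic_eq_smult_conj_quad[OF assms] .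
  then show ?thesis
    by (simp add: conj_quad_def)
qed

lemma squarefree_prime_elem_mult_iff:
  fixes p g :: "'a :: factorial_semiring_gcd"
  assumes "prime_elem p"
  shows "squarefree (p * g) \<longleftrightarrow> squarefree g \<and> \<not> p dvd g"
proof
  assume sq: "squarefree (p * g)"
  have "\<not> p dvd g"
  proof
    assume "p dvd g"
    then have "p ^ 2 dvd p * g"
      by (simp add: power2_eq_square mult_dvd_mono)
    with sq assms show False
      unfolding squarefree_def prime_elem_def by blast
  qed
  with sq show "squarefree g \<and> \<not> p dvd g"
    using squarefree_multD(2) by blast
next
  assume "squarefree g \<and> \<not> p dvd g"
  with assms show "squarefree (p * g)"
    by (metis squarefree_mult_coprime prime_elem_imp_coprime squarefree_prime_elem)
qed

lemma psd_poly_const_iff [simp]: "psd_poly [:c:] \<longleftrightarrow> c \<ge> 0"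
  by (simp add: psd_poly_def)

lemma psd_poly_cancel_pd:
  assumes "psd_poly (p * g)" and "pd_poly p"
  shows "psd_poly g"
  using assms unfolding psd_poly_def pd_poly_def
  by (metis poly_mult zero_le_mult_iff linorder_not_le)

lemma psd_poly_root_square_factor:
  assumes "psd_poly f" and "poly f s = 0"
  obtains g where "f = [:-s, 1:]^2 * g" "psd_poly g"
proof -
  obtain h where h: "f = [:-s, 1:] * h"
    using assms(2) by (metis dvdE poly_eq_0_iff_dvd)
  have "poly (pderiv f) s = 0"
    by (rule DERIV_local_min[OF poly_DERIV, of 1]) (use assms in \<open>auto simp: psd_poly_def\<close>)
  then have "poly h s = 0"
    unfolding h pderiv_mult by (simp add: pderiv_pCons)
  then obtain g where g: "h = [:-s, 1:] * g"
    by (metis dvdE poly_eq_0_iff_dvd)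
  have f: "f = [:-s, 1:]^2 * g"
    unfolding h g by (simp only: power2_eq_square mult.assoc)
  have nonneg: "poly g x \<ge> 0" if "x \<noteq> s" for x
  proof -
    have "0 \<le> poly f x"
      using assms(1) by (simp add: psd_poly_def)
    with that show ?thesis
      by (simp add: f zero_le_mult_iff)
  qed
  have "eventually (\<lambda>x. poly g x \<ge> 0) (at s)"
    unfolding eventually_at_filter by (rule always_eventually) (simp add: nonneg)
  moreover have "(poly g \<longlongrightarrow> poly g s) (at s)"
    using poly_isCont[where p = g and x = s] by (simp add: isCont_def)
  ultimately have "poly g s \<ge> 0"
    by (intro tendsto_lowerbound) auto
  with nonneg have "psd_poly g"
    by (metis psd_poly_def)
  with f show ?thesis
    by (rule that)
qed

lemma psd_poly_factor_cases:
  assumes q: "pd_poly q" "degree q = 2" and f: "psd_poly f" "degree f > 0"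
  obtains (real_root) s g where "f = [:-s, 1:]^2 * g" "psd_poly g"
    | (self) g where "f = q * g" "psd_poly g"
    | (conj_quad) z g where "Im z \<noteq> 0" "cpoly q z \<noteq> 0" "f = conj_quad z * g" "psd_poly g"
        "\<not> q dvd f"
proof -
  consider s where "poly f s = 0" | "q dvd f" | "\<And>x. poly f x \<noteq> 0" "\<not> q dvd f"
    by blast
  then show ?thesis
  proof cases
    case (1 s)
    then obtain g where "f = [:-s, 1:]^2 * g" "psd_poly g"
      by (rule psd_poly_root_square_factor[OF f(1)])
    then show ?thesis
      by (rule real_root)
  next
    case 2
    then obtain g where g: "f = q * g"
      by (elim dvdE)
    have "psd_poly g"
      using f(1) q(1) unfolding g by (rule psd_poly_cancel_pd)
    with g show ?thesis
      by (rule self)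
  next
    case 3
    obtain z where z: "Im z \<noteq> 0" "conj_quad z dvd f"
      using exists_conj_quad_dvd[OF f(2) 3(1)] by blast
    then obtain g where g: "f = conj_quad z * g"
      by (elim dvdE)
    have "psd_poly g"
      using f(1) pd_poly_conj_quad[OF z(1)] unfolding g by (rule psd_poly_cancel_pd)
    moreover have "cpoly q z \<noteq> 0"
    proof
      assume "cpoly q z = 0"
      with z(1) have "conj_quad z dvd q"
        by (simp add: conj_quad_dvd_iff)
      with q z(1) obtain \<kappa> where "\<kappa> > 0" "q = smult \<kappa> (conj_quad z)"
        by (elim pd_poly_conj_quad_dvd_eq_smult) simp_all
      then have "q dvd f"
        using z(2) by (simp add: smult_dvd_iff)
      with 3(2) show False
        by contradiction
    qed
    ultimately show ?thesis
      using conj_quad z(1) g 3(2) by blast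
  qed
qed

section \<open>Arithmetic in \<open>\<real>[x][\<surd>(-q)]\<close>\<close>

text \<open>The pair \<open>(\<xi>, \<eta>)\<close> encodes \<open>\<eta> + \<xi> \<surd>(-q)\<close>.\<close>

type_synonym qpair = "real poly \<times> real poly"

definition qmult :: "real poly \<Rightarrow> qpair \<Rightarrow> qpair \<Rightarrow> qpair" where
  "qmult q a b = (fst a * snd b + snd a * fst b, snd a * snd b - q * fst a * fst b)"

definition qconj :: "qpair \<Rightarrow> qpair" where
  "qconj a = (- fst a, snd a)"

definition qnorm :: "real poly \<Rightarrow> qpair \<Rightarrow> real poly" where
  "qnorm q a = snd a ^ 2 + q * fst a ^ 2"

lemma qmult_commute: "qmult q a b = qmult q b a"
  by (simp add: qmult_def algebra_simps)

lemma qmult_assoc: "qmult q (qmult q a b) c = qmult q a (qmult q b c)"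
  by (simp add: qmult_def algebra_simps)

lemma qmult_left_commute: "qmult q a (qmult q b c) = qmult q b (qmult q a c)"
  by (metis qmult_assoc qmult_commute)

lemma qmult_scalar [simp]: "qmult q (0, c) b = (c * fst b, c * snd b)"
  by (simp add: qmult_def)

lemma qmult_qconj_self: "qmult q a (qconj a) = (0, qnorm q a)"
  by (simp add: qmult_def qconj_def qnorm_def power2_eq_square algebra_simps)

lemma qnorm_qmult: "qnorm q (qmult q a b) = qnorm q a * qnorm q b"
  by (simp add: qnorm_def qmult_def power2_eq_square algebra_simps)

lemma qnorm_qconj [simp]: "qnorm q (qconj a) = qnorm q a"
  by (simp add: qnorm_def qconj_def)

lemma qnorm_scalar [simp]: "qnorm q (0, c) = c ^ 2"
  by (simp add: qnorm_def)

lemma inj_qmult: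
  assumes "qnorm q p \<noteq> 0"
  shows "inj (qmult q p)"
proof (rule injI)
  fix a b
  assume "qmult q p a = qmult q p b"
  then have "qmult q (qmult q (qconj p) p) a = qmult q (qmult q (qconj p) p) b"
    by (simp add: qmult_assoc)
  then show "a = b"
    using assms by (simp add: qmult_commute[of q "qconj p"] qmult_qconj_self prod_eq_iff)
qed

text \<open>For \<open>w\<^sup>2 = -q(z)\<close>, \<open>qeval z w\<close> is the ring homomorphism \<open>\<real>[x][\<surd>(-q)] \<rightarrow> \<complex>\<close>
  sending \<open>x\<close> to \<open>z\<close> and \<open>\<surd>(-q)\<close> to \<open>w\<close>.\<close>

definition qeval :: "complex \<Rightarrow> complex \<Rightarrow> qpair \<Rightarrow> complex" where
  "qeval z w a = cpoly (snd a) z + w * cpoly (fst a) z"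

lemma qeval_qmult:
  assumes "w^2 = - cpoly q z"
  shows "qeval z w (qmult q a b) = qeval z w a * qeval z w b"
proof -
  have "cpoly q z = - w * w"
    using assms by (simp add: power2_eq_square)
  then show ?thesis
    by (simp add: qeval_def qmult_def algebra_simps)
qed

lemma qeval_qconj: "qeval z w (qconj a) = qeval z (- w) a"
  by (simp add: qeval_def qconj_def)

lemma qeval_times_qeval_neg:
  assumes "w^2 = - cpoly q z"
  shows "qeval z w a * qeval z (- w) a = cpoly (qnorm q a) z"
proof -
  have "cpoly q z = - w * w"
    using assms by (simp add: power2_eq_square)
  then show ?thesis
    by (simp add: qeval_def qnorm_def power2_eq_square algebra_simps)
qed

lemma qeval_roots_imp_conj_quad_factor:
  assumes "Im z \<noteq> 0" "w \<noteq> 0" "qeval z w a = 0" "qeval z (- w) a = 0"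
  obtains b where "a = qmult q (0, conj_quad z) b"
proof -
  have "qeval z w a - qeval z (- w) a = 2 * w * cpoly (fst a) z"
    by (simp add: qeval_def)
  with assms have "cpoly (fst a) z = 0" "cpoly (snd a) z = 0"
    by (simp_all add: qeval_def)
  then obtain k1 k2 where "fst a = conj_quad z * k1" "snd a = conj_quad z * k2"
    using conj_quad_dvd_iff[OF assms(1)] by (metis dvdE)
  then have "a = qmult q (0, conj_quad z) (k1, k2)"
    by (simp add: prod_eq_iff)
  with that show ?thesis .
qed

text \<open>\<open>a \<cdot> qconj p\<close> is killed by both \<open>qeval z w\<close> and \<open>qeval z (- w)\<close>, so it is divisible
  by \<open>conj_quad z = p \<cdot> qconj p\<close>.\<close>

lemma qeval_root_imp_qmult_factor:
  assumes z: "Im z \<noteq> 0" and w: "w^2 = - cpoly q z" "w \<noteq> 0"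
    and p: "qnorm q p = conj_quad z" "qeval z w p = 0" and a: "qeval z w a = 0"
  obtains b where "a = qmult q p b"
proof -
  define c where "c = qmult q a (qconj p)"
  have w': "(- w)^2 = - cpoly q z"
    using w(1) by simp
  have "qeval z w c = 0"
    unfolding c_def qeval_qmult[OF w(1)] by (simp add: a)
  moreover have "qeval z (- w) c = 0"
    unfolding c_def qeval_qmult[OF w'] by (simp add: qeval_qconj p)
  ultimately obtain b where b: "c = qmult q (0, conj_quad z) b"
    using qeval_roots_imp_conj_quad_factor[OF z w(2)] by metis
  have "qmult q (0, conj_quad z) a = qmult q (0, conj_quad z) (qmult q p b)"
  proof -
    have "qmult q (0, conj_quad z) a = qmult q p c"
      unfolding c_def using qmult_qconj_self[of q p]
      by (metis p(1) qmult_assoc qmult_commute)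
    also have "\<dots> = qmult q (0, conj_quad z) (qmult q p b)"
      unfolding b by (rule qmult_left_commute)
    finally show ?thesis .
  qed
  moreover have "inj (qmult q (0, conj_quad z))"
    by (rule inj_qmult) simp
  ultimately have "a = qmult q p b"
    by (meson injD)
  with that show ?thesis .
qed

text \<open>A linear \<open>e\<close> with \<open>e(z) = \<surd>(-q(z))\<close> makes \<open>e\<^sup>2 + q\<close> a positive multiple of
  \<open>conj_quad z\<close>.\<close>

lemma conj_quad_eq_qnorm:
  assumes q: "pd_poly q" "degree q \<le> 2" and z: "Im z \<noteq> 0"
  obtains p where "qnorm q p = conj_quad z"
proof -
  define w where "w = csqrt (- cpoly q z)"
  define v where "v = Im w / Im z"
  define e where "e = [:Re w - v * Re z, v:]"
  have "cpoly e z = w"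
    using z by (simp add: e_def v_def complex_eq_iff field_simps)
  then have "conj_quad z dvd e^2 + q"
    using z by (simp add: conj_quad_dvd_iff w_def)
  moreover have "pd_poly (e^2 + q)"
    using q(1) by (simp add: pd_poly_def add_nonneg_pos)
  moreover have "degree (e^2 + q) \<le> 2"
    using q(2) degree_power_le[of e 2] by (intro degree_add_le) (cases "v = 0"; auto simp: e_def)
  ultimately obtain \<kappa> where \<kappa>: "\<kappa> > 0" "e^2 + q = smult \<kappa> (conj_quad z)"
    using z by (elim pd_poly_conj_quad_dvd_eq_smult)
  have "qnorm q ([:1 / sqrt \<kappa>:], smult (1 / sqrt \<kappa>) e) = smult (1 / \<kappa>) (e^2 + q)"
    using \<kappa>(1) by (simp add: qnorm_def power2_eq_square algebra_simps smult_add_right)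
  also have "\<dots> = conj_quad z"
    unfolding \<kappa>(2) using \<kappa>(1) by simp
  finally show ?thesis
    by (rule that)
qed

lemma psd_poly_eq_qnorm:
  assumes q: "pd_poly q" "degree q \<le> 2" and "psd_poly f"
  obtains a where "qnorm q a = f"
  using assms(3)
proof (induction "degree f" arbitrary: f thesis rule: less_induct)
  case less
  have IH: "\<exists>b. qnorm q b = g" if "psd_poly g" "degree g < degree f" for g
    using less.hyps that by metis
  consider (const) c where "f = [:c:]"
    | (real_root) s where "degree f > 0" "poly f s = 0"
    | (no_root) "degree f > 0" "\<And>x. poly f x \<noteq> 0"
    by (metis degree_eq_zeroE neq0_conv)
  then have "\<exists>a. qnorm q a = f"
  proof cases
    case (const c)
    with less.prems(2) have "qnorm q (0, [:sqrt c:]) = f"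
      by (simp add: qnorm_def power2_eq_square)
    then show ?thesis ..
  next
    case (real_root s)
    then obtain g where g: "f = [:-s, 1:]^2 * g" "psd_poly g"
      using psd_poly_root_square_factor[OF less.prems(2)] by blast
    with real_root(1) have "degree g < degree f"
      by (cases "g = 0") (simp_all add: degree_mult_eq degree_power_eq)
    then obtain b where "qnorm q b = g"
      using IH g(2) by blast
    then have "qnorm q (qmult q (0, [:-s, 1:]) b) = f"
      unfolding qnorm_qmult qnorm_scalar g(1) by simp
    then show ?thesis ..
  next
    case no_root
    then obtain z where z: "Im z \<noteq> 0" "conj_quad z dvd f"
      by (elim exists_conj_quad_dvd)
    then obtain g where g: "f = conj_quad z * g"
      by (elim dvdE)
    have "psd_poly g"
      using less.prems(2) pd_poly_conj_quad[OF z(1)] unfolding g by (rule psd_poly_cancel_pd)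
    moreover have "degree g < degree f"
      using g no_root(1) by (cases "g = 0") (auto simp: degree_mult_eq)
    ultimately obtain b where "qnorm q b = g"
      using IH by blast
    moreover obtain p where "qnorm q p = conj_quad z"
      by (rule conj_quad_eq_qnorm[OF q z(1)])
    ultimately have "qnorm q (qmult q p b) = f"
      by (simp add: qnorm_qmult g)
    then show ?thesis ..
  qed
  then show ?case
    using less.prems(1) by blast
qed

section \<open>Counting representations\<close>

definition qsols :: "real poly \<Rightarrow> real poly \<Rightarrow> qpair set" where
  "qsols q f = {a. qnorm q a = f}"

lemma qmult_image_qsols_subset: "qmult q p ` qsols q g \<subseteq> qsols q (qnorm q p * g)"
  by (auto simp: qsols_def qnorm_qmult)

lemma qmult_mem_qsols_cancel:
  assumes "qmult q p b \<in> qsols q (h * g)" and "qnorm q p = h" and "h \<noteq> 0"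
  shows "b \<in> qsols q g"
  using assms by (simp add: qsols_def qnorm_qmult)

lemma card_qmult_image:
  assumes "qnorm q p \<noteq> 0"
  shows "card (qmult q p ` A) = card A"
  using inj_qmult[OF assms] by (simp add: card_image inj_on_subset[OF _ subset_UNIV])

lemma qsols_linear_square_mult:
  assumes "pd_poly q"
  shows "qsols q ([:-s, 1:]^2 * g) = qmult q (0, [:-s, 1:]) ` qsols q g"
proof
  show "qmult q (0, [:-s, 1:]) ` qsols q g \<subseteq> qsols q ([:-s, 1:]^2 * g)"
    using qmult_image_qsols_subset[of q "(0, [:-s, 1:])" g] by simp
next
  show "qsols q ([:-s, 1:]^2 * g) \<subseteq> qmult q (0, [:-s, 1:]) ` qsols q g"
  proof
    fix a
    assume a: "a \<in> qsols q ([:-s, 1:]^2 * g)"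
    then have "poly (qnorm q a) s = 0"
      by (simp add: qsols_def)
    then have sum: "poly (snd a) s ^ 2 + poly q s * poly (fst a) s ^ 2 = 0"
      by (simp add: qnorm_def)
    have pos: "poly q s > 0"
      using assms by (simp add: pd_poly_def)
    then have "poly q s * poly (fst a) s ^ 2 \<ge> 0"
      by simp
    with sum have "poly (snd a) s ^ 2 = 0" "poly q s * poly (fst a) s ^ 2 = 0"
      using zero_le_power2[of "poly (snd a) s"] by linarith+
    with pos have "poly (snd a) s = 0" "poly (fst a) s = 0"
      by simp_all
    then obtain k1 k2 where "fst a = [:-s, 1:] * k1" "snd a = [:-s, 1:] * k2"
      by (metis dvdE poly_eq_0_iff_dvd)
    then have ak: "a = qmult q (0, [:-s, 1:]) (k1, k2)"
      by (simp add: prod_eq_iff)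
    moreover have "(k1, k2) \<in> qsols q g"
      using a unfolding ak by (rule qmult_mem_qsols_cancel) simp_all
    ultimately show "a \<in> qmult q (0, [:-s, 1:]) ` qsols q g"
      by (rule image_eqI)
  qed
qed

lemma qsols_self_mult:
  assumes "prime_elem q"
  shows "qsols q (q * g) = qmult q (1, 0) ` qsols q g"
proof
  have qnorm_unit: "qnorm q (1, 0) = q"
    by (simp add: qnorm_def)
  show "qmult q (1, 0) ` qsols q g \<subseteq> qsols q (q * g)"
    using qmult_image_qsols_subset[of q "(1, 0)" g] by (simp only: qnorm_unit)
  show "qsols q (q * g) \<subseteq> qmult q (1, 0) ` qsols q g"
  proof
    fix a
    assume a: "a \<in> qsols q (q * g)"
    then have "snd a ^ 2 + q * fst a ^ 2 = q * g"
      by (simp add: qsols_def qnorm_def)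
    then have "snd a ^ 2 = q * (g - fst a ^ 2)"
      by (metis add_diff_cancel_right' right_diff_distrib)
    then have "q dvd snd a ^ 2"
      by simp
    then have "q dvd snd a"
      by (rule prime_elem_dvd_power[OF assms])
    then obtain k where k: "snd a = q * k"
      by (elim dvdE)
    have "qmult q (1, 0) (- k, fst a) = (fst a, q * k)"
      by (simp add: qmult_def)
    then have ak: "a = qmult q (1, 0) (- k, fst a)"
      by (metis k prod.collapse)
    moreover have "(- k, fst a) \<in> qsols q g"
    proof (rule qmult_mem_qsols_cancel)
      show "qmult q (1, 0) (- k, fst a) \<in> qsols q (q * g)"
        using a by (simp only: flip: ak)
    qed (use assms qnorm_unit in \<open>simp_all add: prime_elem_def\<close>)
    ultimately show "a \<in> qmult q (1, 0) ` qsols q g"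
      by (rule image_eqI)
  qed
qed

lemma card_qsols_linear_square_mult:
  assumes "pd_poly q" and "finite (qsols q g)"
  shows "finite (qsols q ([:-s, 1:]^2 * g))" "card (qsols q ([:-s, 1:]^2 * g)) = card (qsols q g)"
  using assms card_qmult_image[of q "(0, [:-s, 1:])"] by (simp_all add: qsols_linear_square_mult)

lemma card_qsols_self_mult:
  assumes "prime_elem q" and "finite (qsols q g)"
  shows "finite (qsols q (q * g))" "card (qsols q (q * g)) = card (qsols q g)"
proof -
  have "qnorm q (1, 0) \<noteq> 0"
    using assms(1) by (simp add: qnorm_def prime_elem_def)
  then show "finite (qsols q (q * g))" "card (qsols q (q * g)) = card (qsols q g)"
    using assms card_qmult_image[of q "(1, 0)"] by (simp_all add: qsols_self_mult)
qed

text \<open>Over \<open>z\<close> with \<open>q(z) \<noteq> 0\<close> the prime \<open>conj_quad z\<close> splits into the two non-associate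
  factors \<open>p\<close> and \<open>qconj p\<close>; \<open>w\<close> singles out the one killed by \<open>qeval z w\<close>.\<close>

lemma qnorm_conj_quad_qeval_root:
  assumes z: "Im z \<noteq> 0" "cpoly q z \<noteq> 0" and p: "qnorm q p = conj_quad z"
  obtains w where "w^2 = - cpoly q z" "w \<noteq> 0" "qeval z w p = 0" "qeval z (- w) p \<noteq> 0"
proof -
  define w where "w = csqrt (- cpoly q z)"
  have w: "w^2 = - cpoly q z" "(- w)^2 = - cpoly q z"
    by (simp_all add: w_def)
  have "qeval z w p * qeval z (- w) p = 0"
    using qeval_times_qeval_neg[OF w(1)] by (simp add: p)
  then obtain u where u: "u = w \<or> u = - w" "qeval z u p = 0"
    by auto
  then have u2: "u^2 = - cpoly q z"
    using w by auto
  then have "u \<noteq> 0"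
    using z(2) by auto
  moreover have "qeval z (- u) p \<noteq> 0"
  proof
    assume "qeval z (- u) p = 0"
    then obtain b where "p = qmult q (0, conj_quad z) b"
      using qeval_roots_imp_conj_quad_factor[OF z(1) \<open>u \<noteq> 0\<close> u(2)] by metis
    then have "conj_quad z * 1 = conj_quad z * (conj_quad z * qnorm q b)"
      using p qnorm_qmult[of q "(0, conj_quad z)" b] by (simp add: power2_eq_square)
    then have "is_unit (conj_quad z)"
      by (metis conj_quad_nonzero dvdI mult_left_cancel)
    then show False
      by simp
  qed
  ultimately show ?thesis
    using that u2 u(2) by blast
qed

lemma qsols_conj_quad_mult:
  assumes z: "Im z \<noteq> 0" "cpoly q z \<noteq> 0" and p: "qnorm q p = conj_quad z"
  shows "qsols q (conj_quad z * g) = qmult q p ` qsols q g \<union> qmult q (qconj p) ` qsols q g"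
proof
  show "qmult q p ` qsols q g \<union> qmult q (qconj p) ` qsols q g \<subseteq> qsols q (conj_quad z * g)"
    using qmult_image_qsols_subset[of q p g] qmult_image_qsols_subset[of q "qconj p" g] p by simp
next
  obtain w where w: "w^2 = - cpoly q z" "w \<noteq> 0" "qeval z w p = 0"
    using qnorm_conj_quad_qeval_root[OF z p] by blast
  have w': "(- w)^2 = - cpoly q z" "- w \<noteq> 0" "qeval z (- w) (qconj p) = 0"
    using w by (simp_all add: qeval_qconj)
  show "qsols q (conj_quad z * g) \<subseteq> qmult q p ` qsols q g \<union> qmult q (qconj p) ` qsols q g"
  proof
    fix a
    assume a: "a \<in> qsols q (conj_quad z * g)"
    then have "qeval z w a * qeval z (- w) a = 0"
      using qeval_times_qeval_neg[OF w(1)] by (simp add: qsols_def)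
    then consider "qeval z w a = 0" | "qeval z (- w) a = 0"
      by auto
    then show "a \<in> qmult q p ` qsols q g \<union> qmult q (qconj p) ` qsols q g"
    proof cases
      case 1
      then obtain b where b: "a = qmult q p b"
        using qeval_root_imp_qmult_factor[OF z(1) w(1,2) p w(3)] by metis
      moreover have "b \<in> qsols q g"
        using a unfolding b by (rule qmult_mem_qsols_cancel[where p = p]) (simp_all add: p)
      ultimately show ?thesis
        by (intro UnI1 image_eqI)
    next
      case 2
      have "qnorm q (qconj p) = conj_quad z"
        by (simp add: p)
      then obtain b where b: "a = qmult q (qconj p) b"
        using qeval_root_imp_qmult_factor[OF z(1) w'(1,2) _ w'(3)] 2 by metis
      moreover have "b \<in> qsols q g"
        using a unfolding b by (rule qmult_mem_qsols_cancel[where p = "qconj p"]) (simp_all add: p)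
      ultimately show ?thesis
        by (intro UnI2 image_eqI)
    qed
  qed
qed

lemma qmult_qconj_images_disjoint_iff:
  assumes q: "pd_poly q" "degree q \<le> 2" and z: "Im z \<noteq> 0" "cpoly q z \<noteq> 0"
    and p: "qnorm q p = conj_quad z" and g: "psd_poly g"
  shows "qmult q p ` qsols q g \<inter> qmult q (qconj p) ` qsols q g = {} \<longleftrightarrow> \<not> conj_quad z dvd g"
proof
  assume disjoint: "qmult q p ` qsols q g \<inter> qmult q (qconj p) ` qsols q g = {}"
  show "\<not> conj_quad z dvd g"
  proof
    assume "conj_quad z dvd g"
    then obtain k where k: "g = conj_quad z * k"
      by (elim dvdE)
    then have "psd_poly k"
      using g psd_poly_cancel_pd pd_poly_conj_quad[OF z(1)] by blast
    then obtain \<beta> where \<beta>: "qnorm q \<beta> = k"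
      using psd_poly_eq_qnorm[OF q] by blast
    have "qmult q (qconj p) \<beta> \<in> qsols q g" "qmult q p \<beta> \<in> qsols q g"
      by (simp_all add: qsols_def qnorm_qmult p \<beta> k)
    moreover have "qmult q p (qmult q (qconj p) \<beta>) = qmult q (qconj p) (qmult q p \<beta>)"
      by (rule qmult_left_commute)
    ultimately show False
      using disjoint by blast
  qed
next
  assume not_dvd: "\<not> conj_quad z dvd g"
  obtain w where w: "w^2 = - cpoly q z" "w \<noteq> 0" "qeval z w p = 0" "qeval z (- w) p \<noteq> 0"
    using qnorm_conj_quad_qeval_root[OF z p] by blast
  have w': "(- w)^2 = - cpoly q z"
    using w(1) by simp
  show "qmult q p ` qsols q g \<inter> qmult q (qconj p) ` qsols q g = {}"
  proof (rule ccontr)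
    assume "qmult q p ` qsols q g \<inter> qmult q (qconj p) ` qsols q g \<noteq> {}"
    then obtain b c where bc: "b \<in> qsols q g" "qmult q p b = qmult q (qconj p) c"
      by blast
    have "qeval z (- w) p * qeval z (- w) b = qeval z w p * qeval z (- w) c"
      using arg_cong[OF bc(2), of "qeval z (- w)"] by (simp add: qeval_qmult[OF w'] qeval_qconj)
    then have "qeval z (- w) b = 0"
      using w(3,4) by simp
    then have "cpoly g z = 0"
      using qeval_times_qeval_neg[OF w', of b] bc(1) by (simp add: qsols_def)
    with not_dvd z(1) show False
      by (simp add: conj_quad_dvd_iff)
  qed
qed

lemma card_qsols_conj_quad_mult:
  assumes q: "pd_poly q" "degree q \<le> 2" and z: "Im z \<noteq> 0" "cpoly q z \<noteq> 0"
    and g: "psd_poly g" "finite (qsols q g)"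
  shows "finite (qsols q (conj_quad z * g))"
    and "card (qsols q (conj_quad z * g)) \<le> 2 * card (qsols q g)"
    and "card (qsols q (conj_quad z * g)) = 2 * card (qsols q g) \<longleftrightarrow> \<not> conj_quad z dvd g"
proof -
  obtain p where p: "qnorm q p = conj_quad z"
    by (rule conj_quad_eq_qnorm[OF q z(1)])
  define A where "A = qmult q p ` qsols q g"
  define B where "B = qmult q (qconj p) ` qsols q g"
  have AB: "qsols q (conj_quad z * g) = A \<union> B"
    using qsols_conj_quad_mult[OF z p] by (simp add: A_def B_def)
  have fin: "finite A" "finite B"
    using g(2) by (simp_all add: A_def B_def)
  have "card A = card (qsols q g)" "card B = card (qsols q g)"
    using p by (simp_all add: A_def B_def card_qmult_image)
  then have card: "card (A \<union> B) + card (A \<inter> B) = 2 * card (qsols q g)"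
    using card_Un_Int[OF fin] by simp
  show "finite (qsols q (conj_quad z * g))"
    using AB fin by simp
  show "card (qsols q (conj_quad z * g)) \<le> 2 * card (qsols q g)"
    using AB card by simp
  have "card (A \<inter> B) = 0 \<longleftrightarrow> A \<inter> B = {}"
    using fin by simp
  also have "\<dots> \<longleftrightarrow> \<not> conj_quad z dvd g"
    unfolding A_def B_def by (rule qmult_qconj_images_disjoint_iff[OF q z p g(1)])
  finally show "card (qsols q (conj_quad z * g)) = 2 * card (qsols q g) \<longleftrightarrow> \<not> conj_quad z dvd g"
    unfolding AB using card by arith
qed

lemma degree_qnorm_ge:
  assumes "lead_coeff q > 0" and "fst a \<noteq> 0"
  shows "degree q + 2 * degree (fst a) \<le> degree (qnorm q a)"
proof -
  define A where "A = snd a ^ 2"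
  define B where "B = q * fst a ^ 2"
  have "q \<noteq> 0"
    using assms(1) by auto
  then have deg_B: "degree B = degree q + 2 * degree (fst a)"
    using assms(2) by (simp add: B_def degree_mult_eq degree_power_eq)
  have "lead_coeff B = lead_coeff q * lead_coeff (fst a) ^ 2"
    by (simp only: B_def lead_coeff_mult lead_coeff_power)
  then have lc_B: "lead_coeff B > 0"
    using assms by simp
  have "degree B \<le> degree (A + B)"
  proof (cases "degree B < degree A")
    case True
    then show ?thesis
      by (simp add: degree_add_eq_left)
  next
    case False
    have "coeff A (degree B) \<ge> 0"
    proof (cases "degree A = degree B")
      case True
      then show ?thesis
        by (metis A_def lead_coeff_power zero_le_power2)
    next
      case False
      with \<open>\<not> degree B < degree A\<close> show ?thesis
        by (simp add: coeff_eq_0)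
    qed
    with lc_B have "coeff (A + B) (degree B) \<noteq> 0"
      by simp
    then show ?thesis
      by (rule le_degree)
  qed
  then show ?thesis
    by (simp add: qnorm_def A_def B_def flip: deg_B)
qed

lemma qsols_const:
  assumes q: "lead_coeff q > 0" "degree q > 0" and "c > 0"
  shows "qsols q [:c:] = {(0, [:sqrt c:]), (0, [:- sqrt c:])}"
proof
  show "qsols q [:c:] \<subseteq> {(0, [:sqrt c:]), (0, [:- sqrt c:])}"
  proof
    fix a
    assume "a \<in> qsols q [:c:]"
    then have a: "qnorm q a = [:c:]"
      by (simp add: qsols_def)
    have "fst a = 0"
      using degree_qnorm_ge[OF q(1), of a] q(2) by (auto simp: a)
    with a have sq: "snd a ^ 2 = [:c:]"
      by (simp add: qnorm_def)
    with \<open>c > 0\<close> have "snd a \<noteq> 0"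
      by auto
    with sq have "degree (snd a) = 0"
      by (metis degree_pCons_0 degree_power_eq mult_eq_0_iff zero_neq_numeral)
    then obtain e where e: "snd a = [:e:]"
      by (elim degree_eq_zeroE)
    with sq have "e ^ 2 = c"
      by (simp add: power2_eq_square)
    then have "e = sqrt c \<or> e = - sqrt c"
      using real_sqrt_abs[of e] by (auto simp: abs_if split: if_splits)
    with e \<open>fst a = 0\<close> show "a \<in> {(0, [:sqrt c:]), (0, [:- sqrt c:])}"
      by (auto simp: prod_eq_iff)
  qed
  show "{(0, [:sqrt c:]), (0, [:- sqrt c:])} \<subseteq> qsols q [:c:]"
    using \<open>c > 0\<close> by (auto simp: qsols_def qnorm_def power2_eq_square)
qed

lemma card_qsols_const:
  assumes "lead_coeff q > 0" "degree q > 0" and "c > 0"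
  shows "finite (qsols q [:c:])" "card (qsols q [:c:]) = 2"
  using qsols_const[OF assms] \<open>c > 0\<close> by simp_all

lemma card_qsols:
  assumes q: "pd_poly q" "degree q = 2"
    and "psd_poly f" "f \<noteq> 0" "degree f = 2 * d"
  shows "finite (qsols q f) \<and> card (qsols q f) \<le> 2 ^ (d + 1)
    \<and> (card (qsols q f) = 2 ^ (d + 1) \<longleftrightarrow> \<not> q dvd f \<and> squarefree f)"
  using assms(3-5)
proof (induction d arbitrary: f)
  case 0
  then obtain c where c: "f = [:c:]" "c > 0"
    by (auto elim: degree_eq_zeroE)
  then have "\<not> q dvd f" "squarefree f"
    using q(2) dvd_imp_degree_le[of q f] by (auto simp: is_unit_iff_degree)
  with c q(2) show ?case
    using card_qsols_const[OF lead_coeff_pd_quadratic[OF q]] by simp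
next
  case (Suc d)
  have IH: "finite (qsols q g) \<and> card (qsols q g) \<le> 2 ^ (d + 1)
      \<and> (card (qsols q g) = 2 ^ (d + 1) \<longleftrightarrow> \<not> q dvd g \<and> squarefree g)"
    if "f = h * g" "degree h = 2" "psd_poly g" for h g
    using that Suc.prems(2,3) by (intro Suc.IH) (auto simp: degree_mult_eq)
  have "degree f > 0"
    using Suc.prems(3) by simp
  with q Suc.prems(1) show ?case
  proof (cases rule: psd_poly_factor_cases)
    case (real_root s g)
    then have "\<not> squarefree f"
      by (intro not_squarefreeI[of "[:-s, 1:]"]) (simp_all add: is_unit_iff_degree)
    with real_root IH[OF real_root(1)] show ?thesis
      using card_qsols_linear_square_mult[OF q(1)] by (auto simp: degree_power_eq)
  next
    case (self g)
    with IH[OF self(1)] q show ?thesis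
      using card_qsols_self_mult[OF prime_elem_pd_quadratic[OF q]] by auto
  next
    case (conj_quad z g)
    note IH = IH[OF conj_quad(3) degree_conj_quad conj_quad(4)]
    note card_f = card_qsols_conj_quad_mult[OF q(1) _ conj_quad(1,2,4), folded conj_quad(3)]
    have "\<not> q dvd g"
      using conj_quad(3,5) by auto
    have "card (qsols q f) = 2 ^ (Suc d + 1)
        \<longleftrightarrow> card (qsols q g) = 2 ^ (d + 1) \<and> \<not> conj_quad z dvd g"
      using card_f IH q(2) by auto
    also have "\<dots> \<longleftrightarrow> squarefree f"
      using IH \<open>\<not> q dvd g\<close> conj_quad(3)
        squarefree_prime_elem_mult_iff[OF prime_elem_conj_quad[OF conj_quad(1)]]
      by auto
    finally show ?thesis
      using card_f IH q(2) conj_quad(5) by auto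
  qed
qed

theorem proposition1p1:
  fixes q :: "real poly"
  assumes "pd_poly q" and "degree q = 2"
  shows "(\<forall>f. psd_poly f \<longrightarrow> (\<exists>\<xi> \<eta>. f = \<eta>^2 + q * \<xi>^2))
    \<and> (\<forall>f (d::nat). psd_poly f \<and> f \<noteq> 0 \<and> degree f = 2 * d \<longrightarrow>
         (let S = {(\<xi>, \<eta>). f = \<eta>^2 + q * \<xi>^2} in
            finite S \<and> card S \<le> 2 ^ (d + 1) \<and>
            (card S = 2 ^ (d + 1) \<longleftrightarrow> \<not> q dvd f \<and> squarefree f)))"
proof (intro conjI allI impI)
  fix f
  assume "psd_poly f"
  then obtain a where "qnorm q a = f"
    using psd_poly_eq_qnorm assms by (metis order_refl)
  then show "\<exists>\<xi> \<eta>. f = \<eta>^2 + q * \<xi>^2"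
    by (auto simp: qnorm_def)
next
  fix f and d :: nat
  assume "psd_poly f \<and> f \<noteq> 0 \<and> degree f = 2 * d"
  moreover have "{(\<xi>, \<eta>). f = \<eta>^2 + q * \<xi>^2} = qsols q f"
    by (auto simp: qsols_def qnorm_def)
  ultimately show "let S = {(\<xi>, \<eta>). f = \<eta>^2 + q * \<xi>^2} in
      finite S \<and> card S \<le> 2 ^ (d + 1) \<and> (card S = 2 ^ (d + 1) \<longleftrightarrow> \<not> q dvd f \<and> squarefree f)"
    using card_qsols[OF assms] by (simp add: Let_def)
qed

end
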